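(* Let $(\mathcal{S},\mathcal{A},P,r)$ be a weakly communicating MDP with finite state and action spaces ($S,A$ their sizes) and $r\in[0,1]$; fix $\delta\in(0,1)$. For integers $i\ge1$ let $n_i=2^i$, let $\widehat P^{(i)}$ be a transition kernel, $\mathcal{H}_i=\{\gamma:\frac1{1-\gamma}=2^k\text{ for an integer }k,\ \sqrt{n_i}\le\frac1{1-\gamma}\le n_i\}$, and for each $\gamma\in\mathcal{H}_i$ let $\widetilde\pi_{\gamma,i}$ be a policy and $\widetilde V_{\gamma,i}\in\mathbb{R}^{\mathcal{S}}$. Suppose that for all $i\ge1$ and all $\gamma\in\mathcal{H}_i$: $\|V^{\pi^\star_\gamma}_\gamma-\widehat V^{\pi^\star_\gamma}_{\gamma,i}\|_\infty\le\frac{\alpha(\delta,n_i)}{1-\gamma}\sqrt{\frac{\|V^{\pi^\star_\gamma}_\gamma\|_{\mathrm{sp}}+1}{n_i}}$; $\widehat V^{\widetilde\pi_{\gamma,i}}_{\gamma,i}\ge\widehat V^\star_{\gamma,i}-\frac1{n_i}\mathbf 1$; $\|\widetilde V_{\gamma,i}-\widehat V^\star_{\gamma,i}\|_\infty\le\frac1{n_i}$; and $\|\widehat V^{\widetilde\pi_{\gamma,i}}_{\gamma,i}-V^{\widetilde\pi_{\gamma,i}}_\gamma\|_\infty\le\frac{\alpha(\delta,n_i)}{1-\gamma}\sqrt{\frac{\|\widehat V^{\widetilde\pi_{\gamma,i}}_{\gamma,i}\|_{\mathrm{sp}}+1}{n_i}}$. Define $$\widehat U_i(\gamma)=(1-\gamma)\max_s\widetilde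 V_{\gamma,i}(s)+5\frac{1-\gamma}{n_i}+\frac{2\alpha(\delta,n_i)^2}{(1-\gamma)n_i}+4\alpha(\delta,n_i)\sqrt{\frac{\|\widetilde V_{\gamma,i}\|_{\mathrm{sp}}+1+\frac3{n_i}}{n_i}},$$ $$\widehat L_i(\gamma)=(1-\gamma)\min_s\widetilde V_{\gamma,i}(s)-2\frac{1-\gamma}{n_i}-\alpha(\delta,n_i)\sqrt{\frac{\|\widetilde V_{\gamma,i}\|_{\mathrm{sp}}+\frac3{n_i}+1}{n_i}}.$$ Then for all integers $i\ge1$ and all $\gamma\in\mathcal{H}_i$, $\widehat L_i(\gamma)\mathbf 1\le\rho^{\widetilde\pi_{\gamma,i}}\le\rho^\star\le\widehat U_i(\gamma)\mathbf 1$.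
   Context: $V^\pi_\gamma,V^\star_\gamma$: discounted value of $\pi$ and optimal value in $(P,r,\gamma)$, $\pi^\star_\gamma$ an optimal policy; $\widehat V^\pi_{\gamma,i},\widehat V^\star_{\gamma,i}$: same in $(\widehat P^{(i)},r,\gamma)$. Gain $\rho^\pi(s)=\lim_T\frac1T\mathbb{E}^\pi_s[\sum_{t<T}r(S_t,A_t)]$, $\rho^\star=\sup_\pi\rho^\pi$. $\|x\|_{\mathrm{sp}}=\max x-\min x$. $\alpha(\tilde\delta,\tilde n)=96\sqrt{\log(24SA\tilde n^5/\tilde\delta)}\log_2(\log_2(\tilde n+4))$. Weakly communicating: states split into a set transient under every stationary policy and a communicating set. *)

theory Defs
  imports "HOL-Analysis.Analysis"
begin

text \<open>Finite MDP: states = UNIV of a finite type 's, actions = UNIV of a finite type 'a.\<close>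

definition is_kernel :: "('s::finite \<Rightarrow> 'a::finite \<Rightarrow> 's \<Rightarrow> real) \<Rightarrow> bool" where
  "is_kernel P \<longleftrightarrow> (\<forall>s a s'. 0 \<le> P s a s') \<and> (\<forall>s a. (\<Sum>s'\<in>UNIV. P s a s') = 1)"

definition is_stat_policy :: "('s::finite \<Rightarrow> 'a::finite \<Rightarrow> real) \<Rightarrow> bool" where
  "is_stat_policy \<pi> \<longleftrightarrow> (\<forall>s a. 0 \<le> \<pi> s a) \<and> (\<forall>s. (\<Sum>a\<in>UNIV. \<pi> s a) = 1)"

definition is_markov_policy :: "(nat \<Rightarrow> 's::finite \<Rightarrow> 'a::finite \<Rightarrow> real) \<Rightarrow> bool" where
  "is_markov_policy \<pi> \<longleftrightarrow> (\<forall>t. is_stat_policy (\<pi> t))"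

definition det_policy :: "('s \<Rightarrow> 'a) \<Rightarrow> 's \<Rightarrow> 'a \<Rightarrow> real" where
  "det_policy f = (\<lambda>s a. if a = f s then 1 else 0)"

primrec state_dist :: "('s::finite \<Rightarrow> 'a::finite \<Rightarrow> 's \<Rightarrow> real) \<Rightarrow> (nat \<Rightarrow> 's \<Rightarrow> 'a \<Rightarrow> real)
    \<Rightarrow> 's \<Rightarrow> nat \<Rightarrow> 's \<Rightarrow> real" where
  "state_dist P \<pi> s 0 = (\<lambda>s'. if s' = s then 1 else 0)"
| "state_dist P \<pi> s (Suc t) =
     (\<lambda>s'. \<Sum>u\<in>UNIV. \<Sum>a\<in>UNIV. state_dist P \<pi> s t u * \<pi> t u a * P u a s')"

definition exp_reward :: "('s::finite \<Rightarrow> 'a::finite \<Rightarrow> 's \<Rightarrow> real) \<Rightarrow> ('s \<Rightarrow> 'a \<Rightarrow> real)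
    \<Rightarrow> (nat \<Rightarrow> 's \<Rightarrow> 'a \<Rightarrow> real) \<Rightarrow> 's \<Rightarrow> nat \<Rightarrow> real" where
  "exp_reward P r \<pi> s t = (\<Sum>u\<in>UNIV. \<Sum>a\<in>UNIV. state_dist P \<pi> s t u * \<pi> t u a * r u a)"

definition disc_value :: "('s::finite \<Rightarrow> 'a::finite \<Rightarrow> 's \<Rightarrow> real) \<Rightarrow> ('s \<Rightarrow> 'a \<Rightarrow> real) \<Rightarrow> real
    \<Rightarrow> (nat \<Rightarrow> 's \<Rightarrow> 'a \<Rightarrow> real) \<Rightarrow> 's \<Rightarrow> real" where
  "disc_value P r \<gamma> \<pi> s = (\<Sum>t. \<gamma> ^ t * exp_reward P r \<pi> s t)"

definition opt_disc_value :: "('s::finite \<Rightarrow> 'a::finite \<Rightarrow> 's \<Rightarrow> real) \<Rightarrow> ('s \<Rightarrow> 'a \<Rightarrow> real) \<Rightarrow> real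
    \<Rightarrow> 's \<Rightarrow> real" where
  "opt_disc_value P r \<gamma> s = (SUP \<pi>\<in>{\<pi>. is_markov_policy \<pi>}. disc_value P r \<gamma> \<pi> s)"

text \<open>Gain: long-run average reward (limsup; it is a genuine limit for stationary policies).\<close>
definition gain :: "('s::finite \<Rightarrow> 'a::finite \<Rightarrow> 's \<Rightarrow> real) \<Rightarrow> ('s \<Rightarrow> 'a \<Rightarrow> real)
    \<Rightarrow> (nat \<Rightarrow> 's \<Rightarrow> 'a \<Rightarrow> real) \<Rightarrow> 's \<Rightarrow> real" where
  "gain P r \<pi> s = real_of_ereal (limsup (\<lambda>T. ereal ((\<Sum>t<T. exp_reward P r \<pi> s t) / real T)))"

definition opt_gain :: "('s::finite \<Rightarrow> 'a::finite \<Rightarrow> 's \<Rightarrow> real) \<Rightarrow> ('s \<Rightarrow> 'a \<Rightarrow> real) \<Rightarrow> 's \<Rightarrow> real" where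
  "opt_gain P r s = (SUP \<pi>\<in>{\<pi>. is_markov_policy \<pi>}. gain P r \<pi> s)"

definition accessible :: "('s::finite \<Rightarrow> 'a::finite \<Rightarrow> 's \<Rightarrow> real) \<Rightarrow> ('s \<Rightarrow> 'a \<Rightarrow> real) \<Rightarrow> 's \<Rightarrow> 's \<Rightarrow> bool" where
  "accessible P \<pi> s s' \<longleftrightarrow> (\<exists>t. 0 < state_dist P (\<lambda>_. \<pi>) s t s')"

text \<open>Transient: finite expected number of visits to s starting from s.\<close>
definition transient_state :: "('s::finite \<Rightarrow> 'a::finite \<Rightarrow> 's \<Rightarrow> real) \<Rightarrow> ('s \<Rightarrow> 'a \<Rightarrow> real) \<Rightarrow> 's \<Rightarrow> bool" where
  "transient_state P \<pi> s \<longleftrightarrow> summable (\<lambda>t. state_dist P (\<lambda>_. \<pi>) s t s)"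

definition weakly_communicating :: "('s::finite \<Rightarrow> 'a::finite \<Rightarrow> 's \<Rightarrow> real) \<Rightarrow> bool" where
  "weakly_communicating P \<longleftrightarrow> (\<exists>C.
     (\<forall>s\<in>C. \<forall>s'\<in>C. \<exists>f. accessible P (det_policy f) s s') \<and>
     (\<forall>s. s \<notin> C \<longrightarrow> (\<forall>\<pi>. is_stat_policy \<pi> \<longrightarrow> transient_state P \<pi> s)))"

definition sup_norm :: "('s::finite \<Rightarrow> real) \<Rightarrow> real" where
  "sup_norm x = Max (range (\<lambda>s. \<bar>x s\<bar>))"

definition span :: "('s::finite \<Rightarrow> real) \<Rightarrow> real" where
  "span x = Max (range x) - Min (range x)"

definition alpha :: "nat \<Rightarrow> nat \<Rightarrow> real \<Rightarrow> real \<Rightarrow> real" where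
  "alpha S A \<delta> n = 96 * sqrt (ln (24 * real S * real A * n ^ 5 / \<delta>)) * log 2 (log 2 (n + 4))"

definition hor_set :: "nat \<Rightarrow> real set" where
  "hor_set i = {\<gamma>. (\<exists>k::int. 1 / (1 - \<gamma>) = 2 powr (real_of_int k)) \<and>
      sqrt (2 ^ i) \<le> 1 / (1 - \<gamma>) \<and> 1 / (1 - \<gamma>) \<le> 2 ^ i}"

definition Uhat :: "real \<Rightarrow> real \<Rightarrow> real \<Rightarrow> ('s::finite \<Rightarrow> real) \<Rightarrow> real" where
  "Uhat \<alpha> n \<gamma> V = (1 - \<gamma>) * Max (range V) + 5 * (1 - \<gamma>) / n + 2 * \<alpha>\<^sup>2 / ((1 - \<gamma>) * n)
      + 4 * \<alpha> * sqrt ((span V + 1 + 3 / n) / n)"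

definition Lhat :: "real \<Rightarrow> real \<Rightarrow> real \<Rightarrow> ('s::finite \<Rightarrow> real) \<Rightarrow> real" where
  "Lhat \<alpha> n \<gamma> V = (1 - \<gamma>) * Min (range V) - 2 * (1 - \<gamma>) / n
      - \<alpha> * sqrt ((span V + 3 / n + 1) / n)"

end

theory Submission
  imports Defs
begin

text \<open>
  Along any Markov policy, the expected reward at time t equals
  E[V(S_t)] - \<gamma> E[V(S_(t+1))] plus the expected Bellman residual of V.
  Summing over t < T telescopes, so the gain is at most (1 - \<gamma>) max V when V dominates
  its Bellman images, and at least (1 - \<gamma>) min V when V is dominated by them.  The value of
  the stationary policy pit satisfies the second condition with equality, and the optimal
  discounted value satisfies the first condition for every policy; this sandwiches the gains.
  The hypotheses then relate both discounted values to the computed Vt.  The error for the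
  optimal value depends on its own span, and solving the resulting quadratic inequality in
  sqrt (span + 1) gives the \<alpha>^2 / ((1 - \<gamma>) n) term of Uhat.
\<close>

subsection \<open>State distributions and expected rewards\<close>

lemma state_dist_nonneg:
  assumes "is_kernel P" and "is_markov_policy \<pi>"
  shows "0 \<le> state_dist P \<pi> s t u"
  using assms
  by (induction t arbitrary: u)
     (auto intro!: sum_nonneg simp: is_kernel_def is_markov_policy_def is_stat_policy_def)

lemma sum_mult_sum_assoc:
  fixes c :: "'u \<Rightarrow> real"
  shows "(\<Sum>v\<in>V. \<Sum>a\<in>A. (\<Sum>u\<in>U. c u * X u v) * Y v a) = (\<Sum>u\<in>U. c u * (\<Sum>v\<in>V. \<Sum>a\<in>A. X u v * Y v a))"
proof -
  have "(\<Sum>v\<in>V. \<Sum>a\<in>A. (\<Sum>u\<in>U. c u * X u v) * Y v a) = (\<Sum>v\<in>V. \<Sum>a\<in>A. \<Sum>u\<in>U. c u * (X u v * Y v a))"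
    by (simp only: sum_distrib_right mult.assoc)
  also have "\<dots> = (\<Sum>v\<in>V. \<Sum>u\<in>U. \<Sum>a\<in>A. c u * (X u v * Y v a))"
    by (rule sum.cong[OF refl], rule sum.swap)
  also have "\<dots> = (\<Sum>u\<in>U. \<Sum>v\<in>V. \<Sum>a\<in>A. c u * (X u v * Y v a))"
    by (rule sum.swap)
  also have "\<dots> = (\<Sum>u\<in>U. c u * (\<Sum>v\<in>V. \<Sum>a\<in>A. X u v * Y v a))"
    by (simp only: sum_distrib_left)
  finally show ?thesis .
qed

lemma sum_state_dist:
  assumes P: "is_kernel P" and \<pi>: "is_markov_policy \<pi>"
  shows "(\<Sum>u\<in>UNIV. state_dist P \<pi> s t u) = 1"
proof (induction t)
  case 0
  then show ?case by simp
next
  case (Suc t)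
  have "(\<Sum>u'\<in>UNIV. state_dist P \<pi> s (Suc t) u')
      = (\<Sum>u\<in>UNIV. \<Sum>u'\<in>UNIV. \<Sum>a\<in>UNIV. state_dist P \<pi> s t u * \<pi> t u a * P u a u')"
    unfolding state_dist.simps by (rule sum.swap)
  also have "\<dots> = (\<Sum>u\<in>UNIV. \<Sum>a\<in>UNIV. state_dist P \<pi> s t u * \<pi> t u a * (\<Sum>u'\<in>UNIV. P u a u'))"
    unfolding sum_distrib_left by (rule sum.cong[OF refl], rule sum.swap)
  also have "\<dots> = (\<Sum>u\<in>UNIV. state_dist P \<pi> s t u * (\<Sum>a\<in>UNIV. \<pi> t u a))"
    using P by (simp add: is_kernel_def sum_distrib_left)
  also have "\<dots> = 1"
    using \<pi> Suc by (simp add: is_markov_policy_def is_stat_policy_def)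
  finally show ?case .
qed

lemma weighted_mean_bounds:
  fixes w V :: "'s::finite \<Rightarrow> real"
  assumes "\<And>u. 0 \<le> w u" and "(\<Sum>u\<in>UNIV. w u) = 1"
  shows "Min (range V) \<le> (\<Sum>u\<in>UNIV. w u * V u)" and "(\<Sum>u\<in>UNIV. w u * V u) \<le> Max (range V)"
proof -
  have "(\<Sum>u\<in>UNIV. w u * Min (range V)) \<le> (\<Sum>u\<in>UNIV. w u * V u)"
    by (intro sum_mono mult_left_mono) (auto simp: assms)
  then show "Min (range V) \<le> (\<Sum>u\<in>UNIV. w u * V u)"
    by (simp add: sum_distrib_right[symmetric] assms)
  have "(\<Sum>u\<in>UNIV. w u * V u) \<le> (\<Sum>u\<in>UNIV. w u * Max (range V))"
    by (intro sum_mono mult_left_mono) (auto simp: assms)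
  then show "(\<Sum>u\<in>UNIV. w u * V u) \<le> Max (range V)"
    by (simp add: sum_distrib_right[symmetric] assms)
qed

lemma exp_reward_eq:
  "exp_reward P r \<pi> s t = (\<Sum>u\<in>UNIV. state_dist P \<pi> s t u * (\<Sum>a\<in>UNIV. \<pi> t u a * r u a))"
  by (simp add: exp_reward_def sum_distrib_left mult.assoc)

lemma exp_reward_bounds:
  assumes P: "is_kernel P" and \<pi>: "is_markov_policy \<pi>" and r: "\<forall>s a. 0 \<le> r s a \<and> r s a \<le> 1"
  shows "0 \<le> exp_reward P r \<pi> s t" and "exp_reward P r \<pi> s t \<le> 1"
proof -
  define \<rho> where "\<rho> u = (\<Sum>a\<in>UNIV. \<pi> t u a * r u a)" for u
  have \<pi>t: "is_stat_policy (\<pi> t)"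
    using \<pi> by (simp add: is_markov_policy_def)
  have "\<rho> u \<le> (\<Sum>a\<in>UNIV. \<pi> t u a)" for u
    unfolding \<rho>_def
    by (rule sum_mono) (use \<pi>t r in \<open>auto simp: is_stat_policy_def intro: mult_left_le\<close>)
  then have \<rho>: "0 \<le> \<rho> u \<and> \<rho> u \<le> 1" for u
    using \<pi>t r by (auto simp: is_stat_policy_def \<rho>_def intro!: sum_nonneg)
  show "0 \<le> exp_reward P r \<pi> s t"
    unfolding exp_reward_eq \<rho>_def[symmetric]
    by (intro sum_nonneg mult_nonneg_nonneg) (use \<rho> state_dist_nonneg[OF P \<pi>] in auto)
  have "exp_reward P r \<pi> s t \<le> Max (range \<rho>)"
    unfolding exp_reward_eq \<rho>_def[symmetric]
    by (rule weighted_mean_bounds) (auto simp: state_dist_nonneg[OF P \<pi>] sum_state_dist[OF P \<pi>])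
  also have "\<dots> \<le> 1"
    using \<rho> by auto
  finally show "exp_reward P r \<pi> s t \<le> 1" .
qed

lemma state_dist_Suc_first_step:
  "state_dist P \<pi> s (Suc t) s' =
   (\<Sum>u\<in>UNIV. (\<Sum>a\<in>UNIV. \<pi> 0 s a * P s a u) * state_dist P (\<lambda>t. \<pi> (Suc t)) u t s')"
proof (induction t arbitrary: s')
  case 0
  then show ?case
    by (simp add: sum.remove[of UNIV s] if_distrib[of "\<lambda>x. _ * x"] cong: if_cong)
next
  case (Suc t)
  have "state_dist P \<pi> s (Suc (Suc t)) s' =
     (\<Sum>v\<in>UNIV. \<Sum>a\<in>UNIV. (\<Sum>u\<in>UNIV. (\<Sum>a\<in>UNIV. \<pi> 0 s a * P s a u) * state_dist P (\<lambda>t. \<pi> (Suc t)) u t v)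
        * (\<pi> (Suc t) v a * P v a s'))"
    using Suc by (simp add: mult.assoc)
  also have "\<dots> = (\<Sum>u\<in>UNIV. (\<Sum>a\<in>UNIV. \<pi> 0 s a * P s a u) * state_dist P (\<lambda>t. \<pi> (Suc t)) u (Suc t) s')"
    by (simp only: sum_mult_sum_assoc state_dist.simps mult.assoc)
  finally show ?case .
qed

lemma exp_reward_Suc_first_step:
  "exp_reward P r \<pi> s (Suc t) =
   (\<Sum>u\<in>UNIV. (\<Sum>a\<in>UNIV. \<pi> 0 s a * P s a u) * exp_reward P r (\<lambda>t. \<pi> (Suc t)) u t)"
proof -
  have "exp_reward P r \<pi> s (Suc t) =
     (\<Sum>v\<in>UNIV. \<Sum>a\<in>UNIV. (\<Sum>u\<in>UNIV. (\<Sum>a\<in>UNIV. \<pi> 0 s a * P s a u) * state_dist P (\<lambda>t. \<pi> (Suc t)) u t v)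
        * (\<pi> (Suc t) v a * r v a))"
    unfolding exp_reward_def state_dist_Suc_first_step by (simp only: mult.assoc)
  also have "\<dots> = (\<Sum>u\<in>UNIV. (\<Sum>a\<in>UNIV. \<pi> 0 s a * P s a u) * exp_reward P r (\<lambda>t. \<pi> (Suc t)) u t)"
    unfolding exp_reward_def by (simp only: sum_mult_sum_assoc mult.assoc)
  finally show ?thesis .
qed

subsection \<open>Discounted values and the Bellman operator\<close>

definition bellman_op :: "('s::finite \<Rightarrow> 'a::finite \<Rightarrow> 's \<Rightarrow> real) \<Rightarrow> ('s \<Rightarrow> 'a \<Rightarrow> real)
    \<Rightarrow> real \<Rightarrow> ('s \<Rightarrow> 'a \<Rightarrow> real) \<Rightarrow> ('s \<Rightarrow> real) \<Rightarrow> 's \<Rightarrow> real" where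
  "bellman_op P r \<gamma> d V s =
     (\<Sum>a\<in>UNIV. d s a * r s a) + \<gamma> * (\<Sum>s'\<in>UNIV. (\<Sum>a\<in>UNIV. d s a * P s a s') * V s')"

lemma is_markov_policy_const: "is_stat_policy d \<Longrightarrow> is_markov_policy (\<lambda>_. d)"
  by (simp add: is_markov_policy_def)

lemma disc_value_summable:
  assumes P: "is_kernel P" and \<pi>: "is_markov_policy \<pi>" and r: "\<forall>s a. 0 \<le> r s a \<and> r s a \<le> 1"
    and \<gamma>: "0 \<le> \<gamma>" "\<gamma> < 1"
  shows "summable (\<lambda>t. \<gamma> ^ t * exp_reward P r \<pi> s t)"
  by (rule summable_comparison_test[of _ "\<lambda>t. \<gamma> ^ t"])
     (use exp_reward_bounds[OF P \<pi> r] \<gamma>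
       in \<open>auto intro!: exI[of _ 0] mult_left_le simp: summable_geometric\<close>)

lemma disc_value_le:
  assumes P: "is_kernel P" and \<pi>: "is_markov_policy \<pi>" and r: "\<forall>s a. 0 \<le> r s a \<and> r s a \<le> 1"
    and \<gamma>: "0 \<le> \<gamma>" "\<gamma> < 1"
  shows "disc_value P r \<gamma> \<pi> s \<le> 1 / (1 - \<gamma>)"
proof -
  have "disc_value P r \<gamma> \<pi> s \<le> (\<Sum>t. \<gamma> ^ t)"
    unfolding disc_value_def
    by (rule suminf_le)
       (use exp_reward_bounds[OF P \<pi> r] \<gamma> disc_value_summable[OF P \<pi> r \<gamma>]
         in \<open>auto intro: mult_left_le simp: summable_geometric\<close>)
  also have "\<dots> = 1 / (1 - \<gamma>)"
    using \<gamma> by (simp add: suminf_geometric)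
  finally show ?thesis .
qed

lemma disc_value_first_step:
  assumes P: "is_kernel P" and \<pi>: "is_markov_policy \<pi>" and r: "\<forall>s a. 0 \<le> r s a \<and> r s a \<le> 1"
    and \<gamma>: "0 \<le> \<gamma>" "\<gamma> < 1"
  shows "disc_value P r \<gamma> \<pi> s = bellman_op P r \<gamma> (\<pi> 0) (disc_value P r \<gamma> (\<lambda>t. \<pi> (Suc t))) s"
proof -
  let ?f = "\<lambda>t. \<gamma> ^ t * exp_reward P r \<pi> s t"
  let ?p = "\<lambda>u. \<Sum>a\<in>UNIV. \<pi> 0 s a * P s a u"
  let ?g = "\<lambda>u t. \<gamma> ^ t * exp_reward P r (\<lambda>t. \<pi> (Suc t)) u t"
  have \<pi>': "is_markov_policy (\<lambda>t. \<pi> (Suc t))"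
    using \<pi> by (simp add: is_markov_policy_def)
  have g: "summable (?g u)" for u
    by (rule disc_value_summable[OF P \<pi>' r \<gamma>])
  have "disc_value P r \<gamma> \<pi> s = ?f 0 + (\<Sum>t. ?f (Suc t))"
    unfolding disc_value_def using suminf_split_head[OF disc_value_summable[OF P \<pi> r \<gamma>]] by simp
  also have "(\<Sum>t. ?f (Suc t)) = (\<Sum>t. \<gamma> * (\<Sum>u\<in>UNIV. ?p u * ?g u t))"
    by (simp add: exp_reward_Suc_first_step sum_distrib_left mult.assoc mult.left_commute)
  also have "\<dots> = \<gamma> * (\<Sum>u\<in>UNIV. \<Sum>t. ?p u * ?g u t)"
    using g by (simp add: suminf_mult summable_sum suminf_sum)
  also have "\<dots> = \<gamma> * (\<Sum>u\<in>UNIV. ?p u * disc_value P r \<gamma> (\<lambda>t. \<pi> (Suc t)) u)"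
    using g by (simp add: suminf_mult disc_value_def)
  finally show ?thesis
    by (simp add: bellman_op_def exp_reward_def sum.remove[of UNIV s])
qed

lemma disc_value_le_opt:
  assumes P: "is_kernel P" and \<pi>: "is_markov_policy \<pi>" and r: "\<forall>s a. 0 \<le> r s a \<and> r s a \<le> 1"
    and \<gamma>: "0 \<le> \<gamma>" "\<gamma> < 1"
  shows "disc_value P r \<gamma> \<pi> s \<le> opt_disc_value P r \<gamma> s"
proof -
  have "bdd_above ((\<lambda>\<pi>. disc_value P r \<gamma> \<pi> s) ` {\<pi>. is_markov_policy \<pi>})"
    by (rule bdd_aboveI2[where M="1 / (1 - \<gamma>)"]) (rule disc_value_le[OF P _ r \<gamma>], simp)
  then show ?thesis
    unfolding opt_disc_value_def by (rule cSUP_upper[rotated]) (use \<pi> in simp)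
qed

lemma bellman_op_le_opt_value:
  assumes P: "is_kernel P" and r: "\<forall>s a. 0 \<le> r s a \<and> r s a \<le> 1" and \<gamma>: "0 \<le> \<gamma>" "\<gamma> < 1"
    and p: "is_stat_policy p" and opt: "\<forall>s. disc_value P r \<gamma> (\<lambda>_. p) s = opt_disc_value P r \<gamma> s"
    and d: "is_stat_policy d"
  shows "bellman_op P r \<gamma> d (disc_value P r \<gamma> (\<lambda>_. p)) s \<le> disc_value P r \<gamma> (\<lambda>_. p) s"
proof -
  define \<pi> where "\<pi> = (\<lambda>t::nat. if t = 0 then d else p)"
  have \<pi>: "is_markov_policy \<pi>"
    using p d by (simp add: \<pi>_def is_markov_policy_def)
  have "bellman_op P r \<gamma> d (disc_value P r \<gamma> (\<lambda>_. p)) s = disc_value P r \<gamma> \<pi> s"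
    using disc_value_first_step[OF P \<pi> r \<gamma>] by (simp add: \<pi>_def)
  also have "\<dots> \<le> opt_disc_value P r \<gamma> s"
    by (rule disc_value_le_opt[OF P \<pi> r \<gamma>])
  finally show ?thesis
    using opt by simp
qed

subsection \<open>Gain bounds by telescoping\<close>

lemma limsup_average_bounds:
  fixes f :: "nat \<Rightarrow> real"
  assumes bounds: "\<And>T. 0 < T \<Longrightarrow> a * real T - K \<le> f T \<and> f T \<le> b * real T + K"
  shows "a \<le> real_of_ereal (limsup (\<lambda>T. ereal (f T / real T)))"
    and "real_of_ereal (limsup (\<lambda>T. ereal (f T / real T))) \<le> b"
proof -
  have K: "(\<lambda>T. K / real T) \<longlonglongrightarrow> 0"
    by (intro tendsto_divide_0[OF tendsto_const] filterlim_at_top_imp_at_infinity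
        filterlim_real_sequentially)
  have lim_b: "(\<lambda>T. ereal (b + K / real T)) \<longlonglongrightarrow> ereal b"
    using tendsto_add[OF tendsto_const[of b] K] by (simp add: lim_ereal)
  have lim_a: "(\<lambda>T. ereal (a - K / real T)) \<longlonglongrightarrow> ereal a"
    using tendsto_diff[OF tendsto_const[of a] K] by (simp add: lim_ereal)
  have ev: "\<forall>\<^sub>F T in sequentially. a - K / real T \<le> f T / real T \<and> f T / real T \<le> b + K / real T"
    using eventually_gt_at_top[of 0]
  proof (rule eventually_mono)
    fix T :: nat
    assume T: "0 < T"
    then have "(a * real T - K) / real T = a - K / real T"
      and "(b * real T + K) / real T = b + K / real T"
      by (simp_all add: field_simps)
    with bounds[OF T] show "a - K / real T \<le> f T / real T \<and> f T / real T \<le> b + K / real T"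
      by (metis T divide_right_mono of_nat_0_le_iff)
  qed
  have "limsup (\<lambda>T. ereal (f T / real T)) \<le> limsup (\<lambda>T. ereal (b + K / real T))"
    by (rule Limsup_mono) (use ev in \<open>auto elim!: eventually_mono\<close>)
  also have "\<dots> = ereal b"
    by (rule lim_imp_Limsup[OF _ lim_b]) simp
  finally have up: "limsup (\<lambda>T. ereal (f T / real T)) \<le> ereal b" .
  have "ereal a = liminf (\<lambda>T. ereal (a - K / real T))"
    by (rule lim_imp_Liminf[OF _ lim_a, symmetric]) simp
  also have "\<dots> \<le> liminf (\<lambda>T. ereal (f T / real T))"
    by (rule Liminf_mono) (use ev in \<open>auto elim!: eventually_mono\<close>)
  also have "\<dots> \<le> limsup (\<lambda>T. ereal (f T / real T))"
    by (rule Liminf_le_Limsup) simp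
  finally have lo: "ereal a \<le> limsup (\<lambda>T. ereal (f T / real T))" .
  from up lo show "a \<le> real_of_ereal (limsup (\<lambda>T. ereal (f T / real T)))"
    and "real_of_ereal (limsup (\<lambda>T. ereal (f T / real T))) \<le> b"
    by (cases "limsup (\<lambda>T. ereal (f T / real T))"; simp)+
qed

lemma gain_le_one:
  assumes P: "is_kernel P" and \<pi>: "is_markov_policy \<pi>" and r: "\<forall>s a. 0 \<le> r s a \<and> r s a \<le> 1"
  shows "gain P r \<pi> s \<le> 1"
proof -
  have "(\<Sum>t<T. exp_reward P r \<pi> s t) \<le> (\<Sum>t<T. 1)" for T
    by (rule sum_mono) (rule exp_reward_bounds(2)[OF P \<pi> r])
  then have "0 * real T - 0 \<le> (\<Sum>t<T. exp_reward P r \<pi> s t)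
      \<and> (\<Sum>t<T. exp_reward P r \<pi> s t) \<le> 1 * real T + 0"
    for T
    by (simp add: sum_nonneg exp_reward_bounds(1)[OF P \<pi> r])
  then show ?thesis
    unfolding gain_def by (rule limsup_average_bounds(2))
qed

lemma gain_le_opt_gain:
  assumes P: "is_kernel P" and \<pi>: "is_markov_policy \<pi>" and r: "\<forall>s a. 0 \<le> r s a \<and> r s a \<le> 1"
  shows "gain P r \<pi> s \<le> opt_gain P r s"
proof -
  have "bdd_above ((\<lambda>\<pi>. gain P r \<pi> s) ` {\<pi>. is_markov_policy \<pi>})"
    by (rule bdd_aboveI2[where M=1]) (rule gain_le_one[OF P _ r], simp)
  then show ?thesis
    unfolding opt_gain_def by (rule cSUP_upper[rotated]) (use \<pi> in simp)
qed

lemma telescoping_sum_bounds: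
  fixes m :: "nat \<Rightarrow> real"
  assumes m: "\<And>t. lo \<le> m t \<and> m t \<le> hi" and \<gamma>: "0 \<le> \<gamma>" "\<gamma> \<le> 1"
  shows "(1 - \<gamma>) * lo * real T - \<gamma> * (hi - lo) \<le> (\<Sum>t<T. m t - \<gamma> * m (Suc t))"
    and "(\<Sum>t<T. m t - \<gamma> * m (Suc t)) \<le> (1 - \<gamma>) * hi * real T + \<gamma> * (hi - lo)"
proof -
  have telescope: "(\<Sum>t<T. m t - \<gamma> * m (Suc t)) = (1 - \<gamma>) * (\<Sum>t<T. m t) + \<gamma> * (m 0 - m T)"
    by (induction T) (simp_all add: algebra_simps)
  have "lo * real T \<le> (\<Sum>t<T. m t)" and "(\<Sum>t<T. m t) \<le> hi * real T"
    using sum_mono[of "{..<T}" "\<lambda>_. lo" m] sum_mono[of "{..<T}" m "\<lambda>_. hi"] m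
    by (auto simp: mult.commute)
  then have "(1 - \<gamma>) * (lo * real T) \<le> (1 - \<gamma>) * (\<Sum>t<T. m t)"
    and "(1 - \<gamma>) * (\<Sum>t<T. m t) \<le> (1 - \<gamma>) * (hi * real T)"
    using \<gamma> by (auto intro!: mult_left_mono)
  moreover have "\<gamma> * (lo - hi) \<le> \<gamma> * (m 0 - m T)" and "\<gamma> * (m 0 - m T) \<le> \<gamma> * (hi - lo)"
    using \<gamma> m[of 0] m[of T] by (auto intro!: mult_left_mono)
  ultimately show "(1 - \<gamma>) * lo * real T - \<gamma> * (hi - lo) \<le> (\<Sum>t<T. m t - \<gamma> * m (Suc t))"
    and "(\<Sum>t<T. m t - \<gamma> * m (Suc t)) \<le> (1 - \<gamma>) * hi * real T + \<gamma> * (hi - lo)"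
    unfolding telescope by (simp_all add: algebra_simps)
qed

lemma sum_state_dist_Suc_mult:
  "(\<Sum>u'\<in>UNIV. state_dist P \<pi> s (Suc t) u' * V u')
   = (\<Sum>u\<in>UNIV. state_dist P \<pi> s t u * (\<Sum>u'\<in>UNIV. (\<Sum>a\<in>UNIV. \<pi> t u a * P u a u') * V u'))"
proof -
  have "(\<Sum>u'\<in>UNIV. state_dist P \<pi> s (Suc t) u' * V u')
      = (\<Sum>u'\<in>UNIV. \<Sum>u\<in>UNIV. \<Sum>a\<in>UNIV. state_dist P \<pi> s t u * \<pi> t u a * P u a u' * V u')"
    by (simp only: state_dist.simps sum_distrib_right)
  also have "\<dots> = (\<Sum>u\<in>UNIV. \<Sum>u'\<in>UNIV. \<Sum>a\<in>UNIV. state_dist P \<pi> s t u * \<pi> t u a * P u a u' * V u')"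
    by (rule sum.swap)
  also have "\<dots> = (\<Sum>u\<in>UNIV. state_dist P \<pi> s t u * (\<Sum>u'\<in>UNIV. (\<Sum>a\<in>UNIV. \<pi> t u a * P u a u') * V u'))"
    by (simp only: sum_distrib_left sum_distrib_right mult.assoc)
  finally show ?thesis .
qed

lemma exp_reward_telescope:
  "exp_reward P r \<pi> s t =
     (\<Sum>u\<in>UNIV. state_dist P \<pi> s t u * V u) - \<gamma> * (\<Sum>u\<in>UNIV. state_dist P \<pi> s (Suc t) u * V u)
     + (\<Sum>u\<in>UNIV. state_dist P \<pi> s t u * (bellman_op P r \<gamma> (\<pi> t) V u - V u))"
proof -
  have "exp_reward P r \<pi> s t = (\<Sum>u\<in>UNIV. state_dist P \<pi> s t u * V u)
      - \<gamma> * (\<Sum>u\<in>UNIV. state_dist P \<pi> s t u * (\<Sum>u'\<in>UNIV. (\<Sum>a\<in>UNIV. \<pi> t u a * P u a u') * V u'))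
      + (\<Sum>u\<in>UNIV. state_dist P \<pi> s t u * (bellman_op P r \<gamma> (\<pi> t) V u - V u))"
    by (simp add: exp_reward_eq bellman_op_def algebra_simps
        sum.distrib sum_subtractf sum_distrib_left)
  then show ?thesis
    by (simp only: sum_state_dist_Suc_mult)
qed

lemma gain_le_of_bellman_op_le:
  assumes P: "is_kernel P" and \<pi>: "is_markov_policy \<pi>" and r: "\<forall>s a. 0 \<le> r s a \<and> r s a \<le> 1"
    and \<gamma>: "0 \<le> \<gamma>" "\<gamma> \<le> 1" and V: "\<And>t u. bellman_op P r \<gamma> (\<pi> t) V u \<le> V u"
  shows "gain P r \<pi> s \<le> (1 - \<gamma>) * Max (range V)"
proof -
  define m where "m t = (\<Sum>u\<in>UNIV. state_dist P \<pi> s t u * V u)" for t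
  have m: "Min (range V) \<le> m t \<and> m t \<le> Max (range V)" for t
    unfolding m_def using weighted_mean_bounds state_dist_nonneg[OF P \<pi>] sum_state_dist[OF P \<pi>]
    by blast
  have "exp_reward P r \<pi> s t \<le> m t - \<gamma> * m (Suc t)" for t
  proof -
    have "(\<Sum>u\<in>UNIV. state_dist P \<pi> s t u * (bellman_op P r \<gamma> (\<pi> t) V u - V u)) \<le> 0"
      using V by (intro sum_nonpos mult_nonneg_nonpos state_dist_nonneg[OF P \<pi>]) auto
    then show ?thesis
      using exp_reward_telescope[of P r \<pi> s t V \<gamma>] by (simp add: m_def)
  qed
  then have upper: "(\<Sum>t<T. exp_reward P r \<pi> s t) \<le> (\<Sum>t<T. m t - \<gamma> * m (Suc t))" for T
    by (rule sum_mono)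
  have lower: "0 \<le> (\<Sum>t<T. exp_reward P r \<pi> s t)" for T
    by (simp add: sum_nonneg exp_reward_bounds(1)[OF P \<pi> r])
  have "0 \<le> \<gamma> * (Max (range V) - Min (range V))"
    using m[of 0] \<gamma> by simp
  then have "0 * real T - \<gamma> * (Max (range V) - Min (range V)) \<le> (\<Sum>t<T. exp_reward P r \<pi> s t)
      \<and> (\<Sum>t<T. exp_reward P r \<pi> s t)
        \<le> (1 - \<gamma>) * Max (range V) * real T + \<gamma> * (Max (range V) - Min (range V))"
    for T
    using upper[of T] lower[of T] telescoping_sum_bounds(2)[where m=m and T=T, OF m \<gamma>] by linarith
  then show ?thesis
    unfolding gain_def by (rule limsup_average_bounds(2))
qed

lemma gain_ge_of_le_bellman_op:
  assumes P: "is_kernel P" and \<pi>: "is_markov_policy \<pi>" and r: "\<forall>s a. 0 \<le> r s a \<and> r s a \<le> 1"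
    and \<gamma>: "0 \<le> \<gamma>" "\<gamma> \<le> 1" and V: "\<And>t u. V u \<le> bellman_op P r \<gamma> (\<pi> t) V u"
  shows "(1 - \<gamma>) * Min (range V) \<le> gain P r \<pi> s"
proof -
  define m where "m t = (\<Sum>u\<in>UNIV. state_dist P \<pi> s t u * V u)" for t
  have m: "Min (range V) \<le> m t \<and> m t \<le> Max (range V)" for t
    unfolding m_def using weighted_mean_bounds state_dist_nonneg[OF P \<pi>] sum_state_dist[OF P \<pi>]
    by blast
  have "m t - \<gamma> * m (Suc t) \<le> exp_reward P r \<pi> s t" for t
  proof -
    have "0 \<le> (\<Sum>u\<in>UNIV. state_dist P \<pi> s t u * (bellman_op P r \<gamma> (\<pi> t) V u - V u))"
      using V by (intro sum_nonneg mult_nonneg_nonneg state_dist_nonneg[OF P \<pi>]) auto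
    then show ?thesis
      using exp_reward_telescope[of P r \<pi> s t V \<gamma>] by (simp add: m_def)
  qed
  then have lower: "(\<Sum>t<T. m t - \<gamma> * m (Suc t)) \<le> (\<Sum>t<T. exp_reward P r \<pi> s t)" for T
    by (rule sum_mono)
  have upper: "(\<Sum>t<T. exp_reward P r \<pi> s t) \<le> real T" for T
    using sum_mono[of "{..<T}" "exp_reward P r \<pi> s" "\<lambda>_. 1"] exp_reward_bounds(2)[OF P \<pi> r] by simp
  have "0 \<le> \<gamma> * (Max (range V) - Min (range V))"
    using m[of 0] \<gamma> by simp
  then have "(1 - \<gamma>) * Min (range V) * real T - \<gamma> * (Max (range V) - Min (range V))
        \<le> (\<Sum>t<T. exp_reward P r \<pi> s t)
      \<and> (\<Sum>t<T. exp_reward P r \<pi> s t) \<le> 1 * real T + \<gamma> * (Max (range V) - Min (range V))"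
    for T
    using upper[of T] lower[of T] telescoping_sum_bounds(1)[where m=m and T=T, OF m \<gamma>] by linarith
  then show ?thesis
    unfolding gain_def by (rule limsup_average_bounds(1))
qed

lemma opt_gain_le_Max_opt_value:
  fixes P :: "'s::finite \<Rightarrow> 'a::finite \<Rightarrow> 's \<Rightarrow> real"
  assumes P: "is_kernel P" and r: "\<forall>s a. 0 \<le> r s a \<and> r s a \<le> 1" and \<gamma>: "0 \<le> \<gamma>" "\<gamma> < 1"
    and p: "is_stat_policy p" and opt: "\<forall>s. disc_value P r \<gamma> (\<lambda>_. p) s = opt_disc_value P r \<gamma> s"
  shows "opt_gain P r s \<le> (1 - \<gamma>) * Max (range (disc_value P r \<gamma> (\<lambda>_. p)))"
  unfolding opt_gain_def
proof (rule cSUP_least)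
  fix \<pi> :: "nat \<Rightarrow> 's \<Rightarrow> 'a \<Rightarrow> real"
  assume "\<pi> \<in> {\<pi>. is_markov_policy \<pi>}"
  then have \<pi>: "is_markov_policy \<pi>" by simp
  show "gain P r \<pi> s \<le> (1 - \<gamma>) * Max (range (disc_value P r \<gamma> (\<lambda>_. p)))"
  proof (rule gain_le_of_bellman_op_le[OF P \<pi> r])
    show "0 \<le> \<gamma>" and "\<gamma> \<le> 1"
      using \<gamma> by simp_all
    show "bellman_op P r \<gamma> (\<pi> t) (disc_value P r \<gamma> (\<lambda>_. p)) u \<le> disc_value P r \<gamma> (\<lambda>_. p) u" for t u
      using \<pi> by (intro bellman_op_le_opt_value[OF P r \<gamma> p opt]) (simp add: is_markov_policy_def)
  qed
qed (use is_markov_policy_const[OF p] in auto)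

lemma Min_disc_value_le_gain:
  assumes P: "is_kernel P" and r: "\<forall>s a. 0 \<le> r s a \<and> r s a \<le> 1" and \<gamma>: "0 \<le> \<gamma>" "\<gamma> < 1"
    and q: "is_stat_policy q"
  shows "(1 - \<gamma>) * Min (range (disc_value P r \<gamma> (\<lambda>_. q))) \<le> gain P r (\<lambda>_. q) s"
proof (rule gain_ge_of_le_bellman_op[OF P is_markov_policy_const[OF q] r])
  show "0 \<le> \<gamma>" and "\<gamma> \<le> 1"
    using \<gamma> by simp_all
  show "disc_value P r \<gamma> (\<lambda>_. q) u \<le> bellman_op P r \<gamma> q (disc_value P r \<gamma> (\<lambda>_. q)) u" for u
    by (rule eq_refl) (rule disc_value_first_step[OF P is_markov_policy_const[OF q] r \<gamma>])
qed

subsection \<open>Perturbation bounds for value vectors\<close>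

lemma abs_le_sup_norm: "\<bar>x s\<bar> \<le> sup_norm (x :: 's::finite \<Rightarrow> real)"
  unfolding sup_norm_def by (rule Max_ge) auto

lemma Max_range_le_shift:
  fixes V W :: "'s::finite \<Rightarrow> real"
  assumes "\<And>s. V s \<le> W s + c"
  shows "Max (range V) \<le> Max (range W) + c"
proof -
  have "Max (range V) \<in> range V"
    by (rule Max_in) auto
  then obtain s where "Max (range V) = V s"
    by blast
  moreover have "W s \<le> Max (range W)"
    by (rule Max_ge) auto
  ultimately show ?thesis
    using assms[of s] by linarith
qed

lemma Min_range_le_shift:
  fixes V W :: "'s::finite \<Rightarrow> real"
  assumes "\<And>s. V s \<le> W s + c"
  shows "Min (range V) \<le> Min (range W) + c"
proof -
  have "Min (range W) \<in> range W"
    by (rule Min_in) auto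
  then obtain s where "Min (range W) = W s"
    by blast
  moreover have "Min (range V) \<le> V s"
    by (rule Min_le) auto
  ultimately show ?thesis
    using assms[of s] by linarith
qed

lemma span_nonneg: "0 \<le> span (V :: 's::finite \<Rightarrow> real)"
  using Min_le[of "range V" "V undefined"] Max_ge[of "range V" "V undefined"]
  by (simp add: span_def)

lemma span_le_of_bounds:
  fixes V W :: "'s::finite \<Rightarrow> real"
  assumes "\<And>s. W s \<le> V s + a" and "\<And>s. V s \<le> W s + b"
  shows "span W \<le> span V + a + b"
  using Max_range_le_shift[of W V a, OF assms(1)] Min_range_le_shift[of V W b, OF assms(2)]
  unfolding span_def by linarith

lemma le_add_sqrt_of_quadratic:
  fixes a c y :: real
  assumes a: "0 \<le> a" and c: "0 \<le> c" and quadratic: "y * y \<le> c + a * y"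
  shows "y \<le> a + sqrt c"
proof (rule ccontr)
  assume "\<not> y \<le> a + sqrt c"
  then have y: "a + sqrt c < y" by simp
  have "c \<le> (a + sqrt c) * sqrt c"
    using a c by (simp add: algebra_simps)
  also have "\<dots> \<le> (a + sqrt c) * (y - a)"
    using y a c by (intro mult_left_mono) auto
  also have "\<dots> < y * (y - a)"
    using y real_sqrt_ge_zero[OF c] by (intro mult_strict_right_mono) linarith+
  finally show False
    using quadratic by (simp add: algebra_simps)
qed

lemma self_bounding_sqrt_le:
  fixes g n \<alpha> q x :: real
  assumes g: "0 < g" and n: "0 < n" and \<alpha>: "0 \<le> \<alpha>" and q: "0 \<le> q" and x: "0 \<le> x"
    and x_le: "x \<le> q + \<alpha> / g * sqrt (q / n) + \<alpha> / g * sqrt (x / n)"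
  shows "\<alpha> * sqrt (x / n) \<le> 2 * \<alpha>\<^sup>2 / (g * n) + 4 * \<alpha> * sqrt (q / n)"
proof -
  define a where "a = \<alpha> / (g * sqrt n)"
  define w where "w = \<alpha> * sqrt (q / n)"
  define e where "e = \<alpha>\<^sup>2 / (g * n)"
  have a: "0 \<le> a" and w: "0 \<le> w" and e: "0 \<le> e"
    using g n \<alpha> q by (simp_all add: a_def w_def e_def)
  have ay: "\<alpha> / g * sqrt (x / n) = a * sqrt x" and aq: "\<alpha> / g * sqrt (q / n) = w / g"
    by (simp_all add: a_def w_def real_sqrt_divide)
  have "sqrt x * sqrt x \<le> (q + w / g) + a * sqrt x"
    using x_le x unfolding ay aq by simp
  moreover have "0 \<le> q + w / g"
    using q w g by simp
  ultimately have "sqrt x \<le> a + sqrt (q + w / g)"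
    using le_add_sqrt_of_quadratic[OF a] by blast
  also have "sqrt (q + w / g) \<le> sqrt q + sqrt (w / g)"
    by (rule sqrt_add_le_add_sqrt) (use q w g in auto)
  finally have "g * a * sqrt x \<le> g * a * (a + sqrt q + sqrt (w / g))"
    using a g by (intro mult_left_mono) auto
  also have "\<dots> = e + w + sqrt (e * w)"
  proof -
    have "g * a * a = e" and "g * a * sqrt q = w"
      using g n by (simp_all add: a_def e_def w_def power2_eq_square real_sqrt_divide)
    moreover have "g * a * sqrt (w / g) = sqrt (e * w)"
      using g n \<alpha> by (simp add: a_def e_def real_sqrt_mult real_sqrt_divide power2_eq_square)
    ultimately show ?thesis
      by (simp add: distrib_left)
  qed
  also have "sqrt (e * w) \<le> (e + w) / 2"
    by (rule arith_geo_mean_sqrt[OF e w])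
  finally have "g * a * sqrt x \<le> e + w + (e + w) / 2"
    by simp
  then have "g * a * sqrt x \<le> 2 * e + 4 * w"
    using e w by (simp add: field_simps)
  moreover have "\<alpha> * sqrt (x / n) = g * a * sqrt x"
    using g by (simp add: a_def real_sqrt_divide)
  ultimately show ?thesis
    by (simp add: e_def w_def)
qed

subsection \<open>The confidence bounds\<close>

lemma value_lower_bound_of_estimates:
  fixes V Vh Vhq Vq :: "'s::finite \<Rightarrow> real"
  assumes n: "0 < n" and \<beta>: "0 \<le> \<beta>"
    and V: "\<And>s. \<bar>V s - Vh s\<bar> \<le> 1 / n"
    and Vhq: "\<And>s. Vh s - 1 / n \<le> Vhq s" "\<And>s. Vhq s \<le> Vh s"
    and Vq: "\<And>s. \<bar>Vhq s - Vq s\<bar> \<le> \<beta> * sqrt ((span Vhq + 1) / n)"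
  shows "V s - 2 / n - \<beta> * sqrt ((span V + 3 / n + 1) / n) \<le> Vq s"
proof -
  have "span Vhq \<le> span V + 1 / n + 2 / n"
  proof (rule span_le_of_bounds)
    show "Vhq s \<le> V s + 1 / n" and "V s \<le> Vhq s + 2 / n" for s
      using V[of s] Vhq(1,2)[of s] by (auto simp: abs_le_iff)
  qed
  then have "sqrt ((span Vhq + 1) / n) \<le> sqrt ((span V + 3 / n + 1) / n)"
    using n by (intro real_sqrt_le_mono divide_right_mono) auto
  then have "\<beta> * sqrt ((span Vhq + 1) / n) \<le> \<beta> * sqrt ((span V + 3 / n + 1) / n)"
    using \<beta> by (rule mult_left_mono)
  then show ?thesis
    using V[of s] Vhq(1)[of s] Vq[of s] by (auto simp: abs_le_iff)
qed

lemma Max_value_le_Uhat: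
  fixes V Vh Vp Vhp :: "'s::finite \<Rightarrow> real"
  assumes \<gamma>: "\<gamma> < 1" and n: "0 < n" and \<alpha>: "0 \<le> \<alpha>"
    and V: "\<And>s. \<bar>V s - Vh s\<bar> \<le> 1 / n"
    and Vhp: "\<And>s. Vhp s \<le> Vh s"
    and Vp: "\<And>s. \<bar>Vp s - Vhp s\<bar> \<le> \<alpha> / (1 - \<gamma>) * sqrt ((span Vp + 1) / n)"
    and lower: "\<And>s. V s - 2 / n - \<alpha> / (1 - \<gamma>) * sqrt ((span V + 3 / n + 1) / n) \<le> Vp s"
  shows "(1 - \<gamma>) * Max (range Vp) \<le> Uhat \<alpha> n \<gamma> V"
proof -
  define g where "g = 1 - \<gamma>"
  define q where "q = span V + 1 + 3 / n"
  define D where "D = \<alpha> / g * sqrt ((span Vp + 1) / n)"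
  have g: "0 < g"
    using \<gamma> by (simp add: g_def)
  have lower': "V s \<le> Vp s + (2 / n + \<alpha> / g * sqrt (q / n))" for s
    using lower[of s] by (simp add: g_def q_def add_ac)
  have upper: "Vp s \<le> V s + (1 / n + D)" for s
    using V[of s] Vhp[of s] Vp[of s] by (auto simp: abs_le_iff g_def D_def)
  have "span Vp \<le> span V + (1 / n + D) + (2 / n + \<alpha> / g * sqrt (q / n))"
    using upper lower' by (rule span_le_of_bounds)
  then have "span Vp + 1 \<le> q + \<alpha> / g * sqrt (q / n) + \<alpha> / g * sqrt ((span Vp + 1) / n)"
    by (simp add: q_def D_def)
  then have gD: "g * D \<le> 2 * \<alpha>\<^sup>2 / (g * n) + 4 * \<alpha> * sqrt (q / n)"
    using self_bounding_sqrt_le[OF g n \<alpha>] span_nonneg[of V] span_nonneg[of Vp] n g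
    by (simp add: q_def D_def)
  have "g * Max (range Vp) \<le> g * (Max (range V) + (1 / n + D))"
    using Max_range_le_shift[of Vp V "1 / n + D", OF upper] g by (intro mult_left_mono) auto
  also have "\<dots> = g * Max (range V) + g / n + g * D"
    by (simp add: algebra_simps)
  also have "\<dots> \<le> Uhat \<alpha> n \<gamma> V"
  proof -
    have "g / n \<le> 5 * g / n"
      using g n by (simp add: divide_right_mono)
    then show ?thesis
      using gD by (simp add: Uhat_def g_def q_def)
  qed
  finally show ?thesis
    by (simp add: g_def)
qed

lemma gain_bounds_of_value_estimates:
  fixes P Ph :: "'s::finite \<Rightarrow> 'a::finite \<Rightarrow> 's \<Rightarrow> real"
  assumes P: "is_kernel P" and Ph: "is_kernel Ph" and r: "\<forall>s a. 0 \<le> r s a \<and> r s a \<le> 1"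
    and \<gamma>: "0 \<le> \<gamma>" "\<gamma> < 1" and n: "0 < n" and \<alpha>: "0 \<le> \<alpha>"
    and p: "is_stat_policy p" and p_opt: "\<forall>s. disc_value P r \<gamma> (\<lambda>_. p) s = opt_disc_value P r \<gamma> s"
    and q: "is_stat_policy q"
    and h1: "sup_norm (\<lambda>s. disc_value P r \<gamma> (\<lambda>_. p) s - disc_value Ph r \<gamma> (\<lambda>_. p) s)
        \<le> \<alpha> / (1 - \<gamma>) * sqrt ((span (disc_value P r \<gamma> (\<lambda>_. p)) + 1) / n)"
    and h2: "\<forall>s. disc_value Ph r \<gamma> (\<lambda>_. q) s \<ge> opt_disc_value Ph r \<gamma> s - 1 / n"
    and h3: "sup_norm (\<lambda>s. V s - opt_disc_value Ph r \<gamma> s) \<le> 1 / n"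
    and h4: "sup_norm (\<lambda>s. disc_value Ph r \<gamma> (\<lambda>_. q) s - disc_value P r \<gamma> (\<lambda>_. q) s)
        \<le> \<alpha> / (1 - \<gamma>) * sqrt ((span (disc_value Ph r \<gamma> (\<lambda>_. q)) + 1) / n)"
  shows "Lhat \<alpha> n \<gamma> V \<le> gain P r (\<lambda>_. q) s \<and> gain P r (\<lambda>_. q) s \<le> opt_gain P r s
    \<and> opt_gain P r s \<le> Uhat \<alpha> n \<gamma> V"
proof -
  define B where "B = \<alpha> / (1 - \<gamma>) * sqrt ((span V + 3 / n + 1) / n)"
  have \<beta>: "0 \<le> \<alpha> / (1 - \<gamma>)"
    using \<alpha> \<gamma> by simp
  have h1': "\<bar>disc_value P r \<gamma> (\<lambda>_. p) u - disc_value Ph r \<gamma> (\<lambda>_. p) u\<bar>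
      \<le> \<alpha> / (1 - \<gamma>) * sqrt ((span (disc_value P r \<gamma> (\<lambda>_. p)) + 1) / n)" for u
    using order_trans[OF abs_le_sup_norm h1] .
  have h3': "\<bar>V u - opt_disc_value Ph r \<gamma> u\<bar> \<le> 1 / n" for u
    using order_trans[OF abs_le_sup_norm h3] .
  have h4': "\<bar>disc_value Ph r \<gamma> (\<lambda>_. q) u - disc_value P r \<gamma> (\<lambda>_. q) u\<bar>
      \<le> \<alpha> / (1 - \<gamma>) * sqrt ((span (disc_value Ph r \<gamma> (\<lambda>_. q)) + 1) / n)" for u
    using order_trans[OF abs_le_sup_norm h4] .
  have Vq_lower: "V u - 2 / n - B \<le> disc_value P r \<gamma> (\<lambda>_. q) u" for u
    unfolding B_def
    by (rule value_lower_bound_of_estimates[OF n \<beta> h3' _ _ h4'])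
      (use h2 disc_value_le_opt[OF Ph is_markov_policy_const[OF q] r \<gamma>] in auto)
  have "Lhat \<alpha> n \<gamma> V = (1 - \<gamma>) * Min (range V) - 2 * (1 - \<gamma>) / n - (1 - \<gamma>) * B"
    using \<gamma> by (simp add: Lhat_def B_def)
  also have "\<dots> = (1 - \<gamma>) * (Min (range V) - (2 / n + B))"
    by (simp add: algebra_simps)
  also have "\<dots> \<le> (1 - \<gamma>) * Min (range (disc_value P r \<gamma> (\<lambda>_. q)))"
  proof -
    have "V u \<le> disc_value P r \<gamma> (\<lambda>_. q) u + (2 / n + B)" for u
      using Vq_lower[of u] by linarith
    then have "Min (range V) \<le> Min (range (disc_value P r \<gamma> (\<lambda>_. q))) + (2 / n + B)"
      by (rule Min_range_le_shift)
    then show ?thesis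
      using \<gamma> by (intro mult_left_mono) linarith+
  qed
  also have "\<dots> \<le> gain P r (\<lambda>_. q) s"
    by (rule Min_disc_value_le_gain[OF P r \<gamma> q])
  finally have "Lhat \<alpha> n \<gamma> V \<le> gain P r (\<lambda>_. q) s" .
  moreover have "gain P r (\<lambda>_. q) s \<le> opt_gain P r s"
    by (rule gain_le_opt_gain[OF P is_markov_policy_const[OF q] r])
  moreover have "opt_gain P r s \<le> Uhat \<alpha> n \<gamma> V"
  proof -
    have "disc_value P r \<gamma> (\<lambda>_. q) u \<le> disc_value P r \<gamma> (\<lambda>_. p) u" for u
      using p_opt disc_value_le_opt[OF P is_markov_policy_const[OF q] r \<gamma>] by simp
    then have "(1 - \<gamma>) * Max (range (disc_value P r \<gamma> (\<lambda>_. p))) \<le> Uhat \<alpha> n \<gamma> V"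
      using Vq_lower
      by (intro Max_value_le_Uhat[OF \<gamma>(2) n \<alpha> h3' _ h1'])
        (auto simp: B_def
          intro: order_trans disc_value_le_opt[OF Ph is_markov_policy_const[OF p] r \<gamma>])
    then show ?thesis
      by (rule order_trans[OF opt_gain_le_Max_opt_value[OF P r \<gamma> p p_opt]])
  qed
  ultimately show ?thesis
    by blast
qed

lemma hor_set_discount_bounds:
  assumes "\<gamma> \<in> hor_set i"
  shows "0 \<le> \<gamma>" and "\<gamma> < 1"
proof -
  have "1 \<le> sqrt (2 ^ i :: real)"
    by simp
  also have "\<dots> \<le> 1 / (1 - \<gamma>)"
    using assms by (simp add: hor_set_def)
  finally show "0 \<le> \<gamma>" and "\<gamma> < 1"
    by (auto simp: le_divide_eq_1)
qed

lemma alpha_nonneg: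
  assumes "0 < S" and "0 < A" and "0 < \<delta>" and "\<delta> \<le> 1" and "1 \<le> n"
  shows "0 \<le> alpha S A \<delta> n"
proof -
  have "1 \<le> 24 * real S * real A * n ^ 5"
    using assms by (simp add: mult_ge1_I)
  also have "\<dots> \<le> 24 * real S * real A * n ^ 5 / \<delta>"
    using assms calculation by (simp add: le_divide_eq mult_left_le)
  finally have "0 \<le> ln (24 * real S * real A * n ^ 5 / \<delta>)"
    by simp
  moreover have "0 \<le> log 2 (log 2 (n + 4))"
    using assms by simp
  ultimately show ?thesis
    unfolding alpha_def by simp
qed

theorem lemma9:
  fixes P :: "'s::finite \<Rightarrow> 'a::finite \<Rightarrow> 's \<Rightarrow> real"
    and r :: "'s \<Rightarrow> 'a \<Rightarrow> real"
    and \<delta> :: real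
    and Phat :: "nat \<Rightarrow> 's \<Rightarrow> 'a \<Rightarrow> 's \<Rightarrow> real"
    and pit :: "real \<Rightarrow> nat \<Rightarrow> 's \<Rightarrow> 'a \<Rightarrow> real"
    and Vt :: "real \<Rightarrow> nat \<Rightarrow> 's \<Rightarrow> real"
    and pistar :: "real \<Rightarrow> 's \<Rightarrow> 'a \<Rightarrow> real"
  assumes P: "is_kernel P"
    and wc: "weakly_communicating P"
    and r: "\<forall>s a. 0 \<le> r s a \<and> r s a \<le> 1"
    and \<delta>: "0 < \<delta>" "\<delta> < 1"
    and Phat: "\<forall>i\<ge>1. is_kernel (Phat i)"
    and pistar: "\<forall>i\<ge>1. \<forall>\<gamma>\<in>hor_set i. is_stat_policy (pistar \<gamma>) \<and>
        (\<forall>s. disc_value P r \<gamma> (\<lambda>_. pistar \<gamma>) s = opt_disc_value P r \<gamma> s)"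
    and pit: "\<forall>i\<ge>1. \<forall>\<gamma>\<in>hor_set i. is_stat_policy (pit \<gamma> i)"
    and h1: "\<forall>i\<ge>1. \<forall>\<gamma>\<in>hor_set i.
        sup_norm (\<lambda>s. disc_value P r \<gamma> (\<lambda>_. pistar \<gamma>) s - disc_value (Phat i) r \<gamma> (\<lambda>_. pistar \<gamma>) s)
        \<le> alpha CARD('s) CARD('a) \<delta> (2 ^ i) / (1 - \<gamma>) *
           sqrt ((span (disc_value P r \<gamma> (\<lambda>_. pistar \<gamma>)) + 1) / 2 ^ i)"
    and h2: "\<forall>i\<ge>1. \<forall>\<gamma>\<in>hor_set i. \<forall>s.
        disc_value (Phat i) r \<gamma> (\<lambda>_. pit \<gamma> i) s \<ge> opt_disc_value (Phat i) r \<gamma> s - 1 / 2 ^ i"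
    and h3: "\<forall>i\<ge>1. \<forall>\<gamma>\<in>hor_set i.
        sup_norm (\<lambda>s. Vt \<gamma> i s - opt_disc_value (Phat i) r \<gamma> s) \<le> 1 / 2 ^ i"
    and h4: "\<forall>i\<ge>1. \<forall>\<gamma>\<in>hor_set i.
        sup_norm (\<lambda>s. disc_value (Phat i) r \<gamma> (\<lambda>_. pit \<gamma> i) s - disc_value P r \<gamma> (\<lambda>_. pit \<gamma> i) s)
        \<le> alpha CARD('s) CARD('a) \<delta> (2 ^ i) / (1 - \<gamma>) *
           sqrt ((span (disc_value (Phat i) r \<gamma> (\<lambda>_. pit \<gamma> i)) + 1) / 2 ^ i)"
  shows "\<forall>i\<ge>1. \<forall>\<gamma>\<in>hor_set i. \<forall>s.
      Lhat (alpha CARD('s) CARD('a) \<delta> (2 ^ i)) (2 ^ i) \<gamma> (Vt \<gamma> i) \<le> gain P r (\<lambda>_. pit \<gamma> i) s \<and>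
      gain P r (\<lambda>_. pit \<gamma> i) s \<le> opt_gain P r s \<and>
      opt_gain P r s \<le> Uhat (alpha CARD('s) CARD('a) \<delta> (2 ^ i)) (2 ^ i) \<gamma> (Vt \<gamma> i)"
proof (intro allI impI ballI)
  fix i :: nat and \<gamma> :: real and s :: 's
  assume i: "1 \<le> i" and \<gamma>: "\<gamma> \<in> hor_set i"
  have "0 \<le> alpha CARD('s) CARD('a) \<delta> (2 ^ i)"
    using \<delta> by (intro alpha_nonneg) auto
  then show "Lhat (alpha CARD('s) CARD('a) \<delta> (2 ^ i)) (2 ^ i) \<gamma> (Vt \<gamma> i) \<le> gain P r (\<lambda>_. pit \<gamma> i) s \<and>
      gain P r (\<lambda>_. pit \<gamma> i) s \<le> opt_gain P r s \<and>
      opt_gain P r s \<le> Uhat (alpha CARD('s) CARD('a) \<delta> (2 ^ i)) (2 ^ i) \<gamma> (Vt \<gamma> i)"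
    using i \<gamma> Phat pistar pit h1 h2 h3 h4
    by (intro gain_bounds_of_value_estimates[OF P _ r hor_set_discount_bounds[OF \<gamma>]]) auto
qed

end
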